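(* Let $\Lambda=\{a_1<\dots<a_m\}$ be finite with $m\ge4$. A certainty preserving PAF $\psi:\mathcal P^N\to\mathcal P$ is both Level-SP and $L_1^{\mathcal P}$-SP if and only if it is dictatorial, i.e. there is $i\in N$ with $\psi(\mathbf p)=p_i$ for all $\mathbf p$.
   Context: $N=\{1,\dots,n\}$; $\mathcal P$ is the set of probability distributions on $\Lambda$, identified with vectors $(p(a_1),\dots,p(a_m))$; $\mathcal C$ the CDFs, $\pi(p)(a)=p(\{x\le a\})$. A PAF is a map $\psi:\mathcal P^N\to\mathcal P$ with associated CAF $\Psi$ given by $\Psi(\pi(p_1),\dots,\pi(p_n))=\pi(\psi(p_1,\dots,p_n))$; $P_i=\pi(p_i)$. $\mathbf z_{-i}(z_i')$ is $\mathbf z$ with $i$-th coordinate replaced by $z_i'$. $\psi$ is Level-SP if for every $i$, $\mathbf P$, $P_i'$, $a$: $P_i(a)<\Psi(\mathbf P)(a)\Rightarrow\Psi(\mathbf P)(a)\le\Psi(\mathbf P_{-i}(P_i'))(a)$ and $P_i(a)>\Psi(\mathbf P)(a)\Rightarrow\Psi(\mathbf P)(a)\ge\Psi(\mathbf P_{-i}(P_i'))(a)$. $\psi$ is $L_1^{\mathcal P}$-SP if for all $i$, $\mathbf p\in\mathcal P^N$, $p_i'\in\mathcal P$: $\|\psi(\mathbf p)-p_i\|_1\le\|\psi(\mathbf p_{-i}(p_i'))-p_i\|_1$, where $\|p-q\|_1=\sum_{k=1}^m|p(a_k)-q(a_k)|$. $\psi$ is certainty preserving if for every profile $\mathbf p$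 and $A\subseteq\Lambda$, $p_i(A)=1$ for all $i$ implies $\psi(\mathbf p)(A)=1$. *)

theory Defs
  imports Complex_Main "HOL-Library.FuncSet"
begin

text \<open>The ordered finite set Lambda = {a_1 < ... < a_m} is represented by the indices
  {0..<m} with the natural order (index k stands for a_(k+1)).\<close>

definition Dists :: "nat \<Rightarrow> (nat \<Rightarrow> real) set" where
  "Dists m = {p. (\<forall>k<m. 0 \<le> p k) \<and> (\<forall>k\<ge>m. p k = 0) \<and> (\<Sum>k<m. p k) = 1}"

definition Agents :: "nat \<Rightarrow> nat set" where
  "Agents n = {1..n}"

definition Profiles :: "nat \<Rightarrow> nat \<Rightarrow> (nat \<Rightarrow> nat \<Rightarrow> real) set" where
  "Profiles n m = PiE (Agents n) (\<lambda>_. Dists m)"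

definition is_PAF :: "nat \<Rightarrow> nat \<Rightarrow> ((nat \<Rightarrow> nat \<Rightarrow> real) \<Rightarrow> (nat \<Rightarrow> real)) \<Rightarrow> bool" where
  "is_PAF n m \<psi> \<longleftrightarrow> (\<forall>pp\<in>Profiles n m. \<psi> pp \<in> Dists m)"

definition cdf :: "(nat \<Rightarrow> real) \<Rightarrow> nat \<Rightarrow> real" where
  "cdf p a = (\<Sum>k\<le>a. p k)"

definition prob_of :: "(nat \<Rightarrow> real) \<Rightarrow> nat set \<Rightarrow> real" where
  "prob_of p A = (\<Sum>k\<in>A. p k)"

definition L1 :: "nat \<Rightarrow> (nat \<Rightarrow> real) \<Rightarrow> (nat \<Rightarrow> real) \<Rightarrow> real" where
  "L1 m p q = (\<Sum>k<m. \<bar>p k - q k\<bar>)"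

definition level_SP :: "nat \<Rightarrow> nat \<Rightarrow> ((nat \<Rightarrow> nat \<Rightarrow> real) \<Rightarrow> (nat \<Rightarrow> real)) \<Rightarrow> bool" where
  "level_SP n m \<psi> \<longleftrightarrow>
     (\<forall>i\<in>Agents n. \<forall>pp\<in>Profiles n m. \<forall>p'\<in>Dists m. \<forall>a<m.
        (cdf (pp i) a < cdf (\<psi> pp) a \<longrightarrow> cdf (\<psi> pp) a \<le> cdf (\<psi> (pp(i := p'))) a) \<and>
        (cdf (pp i) a > cdf (\<psi> pp) a \<longrightarrow> cdf (\<psi> pp) a \<ge> cdf (\<psi> (pp(i := p'))) a))"

definition L1_SP :: "nat \<Rightarrow> nat \<Rightarrow> ((nat \<Rightarrow> nat \<Rightarrow> real) \<Rightarrow> (nat \<Rightarrow> real)) \<Rightarrow> bool" where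
  "L1_SP n m \<psi> \<longleftrightarrow>
     (\<forall>i\<in>Agents n. \<forall>pp\<in>Profiles n m. \<forall>p'\<in>Dists m.
        L1 m (\<psi> pp) (pp i) \<le> L1 m (\<psi> (pp(i := p'))) (pp i))"

definition certainty_preserving :: "nat \<Rightarrow> nat \<Rightarrow> ((nat \<Rightarrow> nat \<Rightarrow> real) \<Rightarrow> (nat \<Rightarrow> real)) \<Rightarrow> bool" where
  "certainty_preserving n m \<psi> \<longleftrightarrow>
     (\<forall>pp\<in>Profiles n m. \<forall>A\<subseteq>{..<m}.
        (\<forall>i\<in>Agents n. prob_of (pp i) A = 1) \<longrightarrow> prob_of (\<psi> pp) A = 1)"

definition dictatorial :: "nat \<Rightarrow> nat \<Rightarrow> ((nat \<Rightarrow> nat \<Rightarrow> real) \<Rightarrow> (nat \<Rightarrow> real)) \<Rightarrow> bool" where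
  "dictatorial n m \<psi> \<longleftrightarrow> (\<exists>i\<in>Agents n. \<forall>pp\<in>Profiles n m. \<psi> pp = pp i)"

end

theory Submission
  imports Defs
begin

text \<open>Level-SP, applied to one agent at a time and in both directions, shows that the output cdf at
  a level depends only on the agents' cdf values at that level; certainty preservation makes this
  dependence one and the same function G for all levels below the top. Level-SP also makes G, in
  each coordinate, the median of that coordinate and of the values of G at 0 and at 1 there, so G
  is determined by its values W(S) at the indicator vectors of coalitions S. Testing L1-SP on
  four-point reports for which one agent is pivotal at a single level gives
  W(T + i + k) \<le> max (W(T + i)) (W(T + k)) and min (W(T + i)) (W(T + k)) \<le> W(T). The first
  inequality yields an agent i with W{i} = 1, the second then gives W(S) = 0 for every coalition S
  without i, and by the median form G is the projection onto i.\<close>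

definition point_mass :: "nat \<Rightarrow> real \<Rightarrow> nat \<Rightarrow> real" where
  "point_mass x w = (\<lambda>k. if k = x then w else 0)"

definition three_point :: "nat \<Rightarrow> real \<Rightarrow> nat \<Rightarrow> real \<Rightarrow> nat \<Rightarrow> real \<Rightarrow> nat \<Rightarrow> real" where
  "three_point x0 w0 x1 w1 x2 w2 = (\<lambda>k. point_mass x0 w0 k + point_mass x1 w1 k + point_mass x2 w2 k)"

lemma cdf_point_mass: "cdf (point_mass x w) a = (if x \<le> a then w else 0)"
  unfolding cdf_def point_mass_def by simp

lemma cdf_three_point:
  "cdf (three_point x0 w0 x1 w1 x2 w2) a =
     (if x0 \<le> a then w0 else 0) + (if x1 \<le> a then w1 else 0) + (if x2 \<le> a then w2 else 0)"
  unfolding cdf_def three_point_def point_mass_def by (simp add: sum.distrib)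

lemma point_mass_in_Dists: "x < m \<Longrightarrow> point_mass x 1 \<in> Dists m"
  unfolding Dists_def point_mass_def by auto

lemma three_point_in_Dists:
  assumes "x0 < m" "x1 < m" "x2 < m" "0 \<le> w0" "0 \<le> w1" "0 \<le> w2" "w0 + w1 + w2 = 1"
  shows "three_point x0 w0 x1 w1 x2 w2 \<in> Dists m"
  using assms unfolding Dists_def three_point_def point_mass_def by (auto simp: sum.distrib)

lemma Dists_nonneg: "q \<in> Dists m \<Longrightarrow> 0 \<le> q k"
  unfolding Dists_def by (cases "k < m") auto

lemma cdf_mono: "q \<in> Dists m \<Longrightarrow> a \<le> b \<Longrightarrow> cdf q a \<le> cdf q b"
  unfolding cdf_def using Dists_nonneg by (intro sum_mono2) auto

lemma cdf_nonneg: "q \<in> Dists m \<Longrightarrow> 0 \<le> cdf q a"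
  unfolding cdf_def using Dists_nonneg by (intro sum_nonneg) auto

lemma cdf_0: "cdf q 0 = q 0"
  unfolding cdf_def by simp

lemma cdf_Suc: "cdf q (Suc k) = cdf q k + q (Suc k)"
  unfolding cdf_def by simp

lemma eq_cdf_diff: "1 \<le> k \<Longrightarrow> q k = cdf q k - cdf q (k - 1)"
  using cdf_Suc[of q "k - 1"] by simp

lemma cdf_inject: "(\<And>a. cdf q a = cdf p a) \<Longrightarrow> q = p"
proof (rule ext)
  fix k assume cdf_eq: "\<And>a. cdf q a = cdf p a"
  show "q k = p k"
  proof (cases "k = 0")
    case True
    then show ?thesis using cdf_eq[of 0] by (simp add: cdf_0)
  next
    case False
    then show ?thesis using cdf_eq[of k] cdf_eq[of "k - 1"] eq_cdf_diff[of k q] eq_cdf_diff[of k p] by simp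
  qed
qed

lemma cdf_eq_1:
  assumes q: "q \<in> Dists m" and "m \<le> Suc a"
  shows "cdf q a = 1"
proof -
  have "{..<m} \<subseteq> {..a}" using assms(2) by auto
  then have "cdf q a = (\<Sum>k<m. q k) + (\<Sum>k\<in>{..a} - {..<m}. q k)"
    unfolding cdf_def by (simp add: sum.subset_diff)
  also have "(\<Sum>k\<in>{..a} - {..<m}. q k) = 0"
    using q unfolding Dists_def by (intro sum.neutral) auto
  finally show ?thesis using q unfolding Dists_def by simp
qed

lemma cdf_le_1:
  assumes q: "q \<in> Dists m"
  shows "cdf q a \<le> 1"
  using cdf_mono[OF q, of a "max a m"] cdf_eq_1[OF q, of "max a m"] by simp

lemma cdf_in_unit_interval: "q \<in> Dists m \<Longrightarrow> cdf q a \<in> {0..1}"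
  using cdf_nonneg cdf_le_1 by auto

lemma prob_of_complement:
  assumes q: "q \<in> Dists m" and B: "B \<subseteq> {..<m}"
  shows "prob_of q ({..<m} - B) = 1 - prob_of q B"
  using q sum.subset_diff[OF B, of q] unfolding prob_of_def Dists_def by simp

lemma L1_four_point:
  assumes m: "4 \<le> m" and q: "q \<in> Dists m"
    and c: "\<And>a. 2 \<le> a \<Longrightarrow> a < m - 1 \<Longrightarrow> cdf q a = c"
    and p: "\<And>k. 3 \<le> k \<Longrightarrow> k < m - 1 \<Longrightarrow> p k = 0"
  shows "L1 m q p = \<bar>cdf q 0 - p 0\<bar> + \<bar>cdf q 1 - cdf q 0 - p 1\<bar> + \<bar>c - cdf q 1 - p 2\<bar>
                    + \<bar>1 - c - p (m - 1)\<bar>"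
proof -
  let ?d = "\<lambda>k. \<bar>q k - p k\<bar>"
  obtain l where l: "m = Suc l" "3 \<le> l" using m by (cases m) auto
  have "L1 m q p = sum ?d {..<3} + sum ?d {3..<l} + ?d l"
    unfolding L1_def l using l(2) by (simp add: lessThan_atLeast0 sum.atLeastLessThan_concat)
  moreover have "sum ?d {..<3} = ?d 0 + ?d 1 + ?d 2"
    by (simp add: numeral_3_eq_3 numeral_2_eq_2)
  moreover have "sum ?d {3..<l} = 0"
  proof (intro sum.neutral ballI)
    fix k assume k: "k \<in> {3..<l}"
    then have "q k = 0" using c[of k] c[of "k - 1"] eq_cdf_diff[of k q] l by auto
    then show "?d k = 0" using p[of k] k l by simp
  qed
  moreover have "q 1 = cdf q 1 - cdf q 0" "q 2 = c - cdf q 1" "q l = 1 - c"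
    using eq_cdf_diff[of 1 q] eq_cdf_diff[of 2 q] eq_cdf_diff[of l q] c[of 2] c[of "l - 1"]
      cdf_eq_1[OF q, of l] l by (auto simp: numeral_2_eq_2)
  ultimately show ?thesis using cdf_0[of q] l by simp
qed

lemma fun_upd_in_Profiles:
  "pp \<in> Profiles n m \<Longrightarrow> i \<in> Agents n \<Longrightarrow> p \<in> Dists m \<Longrightarrow> pp(i := p) \<in> Profiles n m"
  unfolding Profiles_def by (metis PiE_fun_upd insert_absorb)

lemma restrict_in_Profiles:
  "(\<And>j. j \<in> Agents n \<Longrightarrow> f j \<in> Dists m) \<Longrightarrow> restrict f (Agents n) \<in> Profiles n m"
  unfolding Profiles_def by (simp add: restrict_PiE_iff)

lemma Profiles_memD: "pp \<in> Profiles n m \<Longrightarrow> j \<in> Agents n \<Longrightarrow> pp j \<in> Dists m"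
  unfolding Profiles_def by auto

lemma restrict_Profiles: "pp \<in> Profiles n m \<Longrightarrow> restrict pp (Agents n) = pp"
  unfolding Profiles_def by (simp add: PiE_iff extensional_restrict)

lemma finite_Agents: "finite (Agents n)"
  unfolding Agents_def by simp

lemma median_form_of_level_SP:
  fixes h :: "real \<Rightarrow> real"
  assumes SP: "\<And>s s'. s \<in> {0..1} \<Longrightarrow> s' \<in> {0..1} \<Longrightarrow>
                 (s < h s \<longrightarrow> h s \<le> h s') \<and> (h s < s \<longrightarrow> h s' \<le> h s)"
    and bounds: "0 \<le> h 0" "h 1 \<le> 1" and t: "t \<in> {0..1}"
  shows "h t = max (h 0) (min t (h 1))"
proof -
  have in0: "0 \<in> {0..1::real}" and in1: "1 \<in> {0..1::real}" by auto
  consider "t < h t" | "h t < t" | "h t = t" by linarith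
  then show ?thesis
  proof cases
    case 1
    then have "h t \<le> h 0" "h t \<le> h 1" using SP[OF t in0] SP[OF t in1] by auto
    moreover have "h 0 \<le> h t" using SP[OF in0 t] 1 \<open>h t \<le> h 0\<close> t by auto
    ultimately show ?thesis using 1 by auto
  next
    case 2
    then have "h 0 \<le> h t" "h 1 \<le> h t" using SP[OF t in0] SP[OF t in1] by auto
    moreover have "h t \<le> h 1" using SP[OF in1 t] 2 \<open>h 1 \<le> h t\<close> t by auto
    ultimately show ?thesis using 2 by auto
  next
    case 3
    moreover have "h 0 \<le> t" using SP[OF in0 t] bounds 3 t by (cases "0 < h 0") auto
    moreover have "t \<le> h 1" using SP[OF in1 t] bounds 3 t by (cases "h 1 < 1") auto
    ultimately show ?thesis by auto
  qed
qed

locale level_SP_aggregator =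
  fixes n m :: nat and \<psi> :: "(nat \<Rightarrow> nat \<Rightarrow> real) \<Rightarrow> (nat \<Rightarrow> real)"
  assumes three_le_m: "3 \<le> m"
    and PAF: "is_PAF n m \<psi>"
    and certainty_preserving: "certainty_preserving n m \<psi>"
    and level_SP: "level_SP n m \<psi>"
begin

lemma aggregate_in_Dists: "pp \<in> Profiles n m \<Longrightarrow> \<psi> pp \<in> Dists m"
  using PAF unfolding is_PAF_def by auto

lemma level_SPD:
  assumes "i \<in> Agents n" "pp \<in> Profiles n m" "p' \<in> Dists m" "a < m"
  shows "cdf (pp i) a < cdf (\<psi> pp) a \<Longrightarrow> cdf (\<psi> pp) a \<le> cdf (\<psi> (pp(i := p'))) a"
    and "cdf (\<psi> pp) a < cdf (pp i) a \<Longrightarrow> cdf (\<psi> (pp(i := p'))) a \<le> cdf (\<psi> pp) a"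
proof -
  from level_SP assms
  have "(cdf (pp i) a < cdf (\<psi> pp) a \<longrightarrow> cdf (\<psi> pp) a \<le> cdf (\<psi> (pp(i := p'))) a) \<and>
        (cdf (\<psi> pp) a < cdf (pp i) a \<longrightarrow> cdf (\<psi> (pp(i := p'))) a \<le> cdf (\<psi> pp) a)"
    unfolding level_SP_def by simp
  then show "cdf (pp i) a < cdf (\<psi> pp) a \<Longrightarrow> cdf (\<psi> pp) a \<le> cdf (\<psi> (pp(i := p'))) a"
    and "cdf (\<psi> pp) a < cdf (pp i) a \<Longrightarrow> cdf (\<psi> (pp(i := p'))) a \<le> cdf (\<psi> pp) a"
    by auto
qed

lemma aggregate_null_set:
  assumes pp: "pp \<in> Profiles n m" and B: "B \<subseteq> {..<m}"
    and null: "\<And>j. j \<in> Agents n \<Longrightarrow> prob_of (pp j) B = 0"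
  shows "prob_of (\<psi> pp) B = 0"
proof -
  have "prob_of (pp j) ({..<m} - B) = 1" if "j \<in> Agents n" for j
    using prob_of_complement[OF Profiles_memD[OF pp that] B] null[OF that] by simp
  moreover have "{..<m} - B \<subseteq> {..<m}" by auto
  ultimately have "prob_of (\<psi> pp) ({..<m} - B) = 1"
    using certainty_preserving pp unfolding certainty_preserving_def by simp
  then show ?thesis using prob_of_complement[OF aggregate_in_Dists[OF pp] B] by simp
qed

text \<open>Level-SP applied twice, once from each of the two profiles, rules out any movement of the
  output at a level where the deviating agent's cdf does not move.\<close>
lemma cdf_aggregate_fun_upd:
  assumes pp: "pp \<in> Profiles n m" and i: "i \<in> Agents n" and p': "p' \<in> Dists m" and a: "a < m"
    and same: "cdf p' a = cdf (pp i) a"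
  shows "cdf (\<psi> (pp(i := p'))) a = cdf (\<psi> pp) a"
proof -
  let ?pp' = "pp(i := p')"
  have pp': "?pp' \<in> Profiles n m" using fun_upd_in_Profiles[OF pp i p'] .
  have restore: "?pp'(i := pp i) = pp" by simp
  note forth = level_SPD[OF i pp p' a]
    and return = level_SPD[OF i pp' Profiles_memD[OF pp i] a, unfolded restore]
  show ?thesis using forth return same by (simp, linarith)
qed

lemma cdf_aggregate_local:
  assumes pp: "pp \<in> Profiles n m" and pp': "pp' \<in> Profiles n m" and a: "a < m"
    and same: "\<And>j. j \<in> Agents n \<Longrightarrow> cdf (pp j) a = cdf (pp' j) a"
  shows "cdf (\<psi> pp) a = cdf (\<psi> pp') a"
proof -
  define hybrid where "hybrid S = restrict (\<lambda>j. if j \<in> S then pp' j else pp j) (Agents n)" for S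
  have "hybrid S \<in> Profiles n m \<and> cdf (\<psi> (hybrid S)) a = cdf (\<psi> pp) a" if "S \<subseteq> Agents n" for S
    using finite_subset[OF that finite_Agents] that
  proof (induction S rule: finite_subset_induct)
    case empty
    have "hybrid {} = pp" using restrict_Profiles[OF pp] unfolding hybrid_def by simp
    then show ?case using pp by simp
  next
    case (insert x F)
    have step: "hybrid (insert x F) = (hybrid F)(x := pp' x)"
      unfolding hybrid_def using insert.hyps(2) by (auto simp: fun_eq_iff)
    have x: "x \<in> Agents n" and p'x: "pp' x \<in> Dists m"
      using insert.hyps Profiles_memD[OF pp'] by auto
    from insert.IH have hF: "hybrid F \<in> Profiles n m"
      and IH: "cdf (\<psi> (hybrid F)) a = cdf (\<psi> pp) a" by auto
    have "hybrid F x = pp x" unfolding hybrid_def using insert.hyps by simp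
    then have "cdf (\<psi> ((hybrid F)(x := pp' x))) a = cdf (\<psi> (hybrid F)) a"
      using cdf_aggregate_fun_upd[OF hF x p'x a] same[OF x] by simp
    then show ?case unfolding step using fun_upd_in_Profiles[OF hF x p'x] IH by metis
  qed
  moreover have "hybrid (Agents n) = pp'"
  proof -
    have "hybrid (Agents n) = restrict pp' (Agents n)" unfolding hybrid_def by (rule restrict_ext) simp
    then show ?thesis using restrict_Profiles[OF pp'] by simp
  qed
  ultimately show ?thesis by auto
qed

definition two_point :: "real \<Rightarrow> nat \<Rightarrow> real" where
  "two_point t = three_point 0 t (m - 1) (1 - t) 0 0"

definition two_point_profile :: "(nat \<Rightarrow> real) \<Rightarrow> nat \<Rightarrow> nat \<Rightarrow> real" where
  "two_point_profile x = restrict (\<lambda>j. two_point (x j)) (Agents n)"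

text \<open>By cdf_aggregate_eq_level_rule below, this is the function G through which the output cdf at
  every level below the top depends on the agents' cdf values at that level.\<close>
definition level_rule :: "(nat \<Rightarrow> real) \<Rightarrow> real" where
  "level_rule x = cdf (\<psi> (two_point_profile x)) 0"

lemma two_point_in_Dists: "t \<in> {0..1} \<Longrightarrow> two_point t \<in> Dists m"
  unfolding two_point_def using three_le_m by (intro three_point_in_Dists) auto

lemma cdf_two_point: "a < m - 1 \<Longrightarrow> cdf (two_point t) a = t"
  unfolding two_point_def cdf_three_point by auto

lemma two_point_profile_in_Profiles:
  "x \<in> Agents n \<rightarrow> {0..1} \<Longrightarrow> two_point_profile x \<in> Profiles n m"
  unfolding two_point_profile_def by (intro restrict_in_Profiles two_point_in_Dists) auto

lemma two_point_profile_fun_upd: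
  "i \<in> Agents n \<Longrightarrow> (two_point_profile x)(i := two_point t) = two_point_profile (x(i := t))"
  unfolding two_point_profile_def by (auto simp: fun_eq_iff)

lemma level_rule_cong: "(\<And>j. j \<in> Agents n \<Longrightarrow> x j = y j) \<Longrightarrow> level_rule x = level_rule y"
  unfolding level_rule_def two_point_profile_def by (metis (mono_tags, lifting) restrict_ext)

lemma level_rule_in_unit_interval: "x \<in> Agents n \<rightarrow> {0..1} \<Longrightarrow> level_rule x \<in> {0..1}"
  unfolding level_rule_def
  by (rule cdf_in_unit_interval[OF aggregate_in_Dists[OF two_point_profile_in_Profiles]])

text \<open>Two-point reports put no mass strictly between the bottom and the top level, hence by
  certainty preservation neither does the output.\<close>
lemma cdf_aggregate_two_point_profile:
  assumes x: "x \<in> Agents n \<rightarrow> {0..1}" and a: "a < m - 1"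
  shows "cdf (\<psi> (two_point_profile x)) a = level_rule x"
proof -
  let ?q = "\<psi> (two_point_profile x)"
  have "prob_of (two_point_profile x j) {1..a} = 0" if "j \<in> Agents n" for j
    using that a unfolding two_point_profile_def two_point_def prob_of_def three_point_def
      point_mass_def by simp
  then have "prob_of ?q {1..a} = 0"
    using a by (intro aggregate_null_set two_point_profile_in_Profiles x) auto
  moreover have "{..a} = insert 0 {1..a}" by auto
  then have "cdf ?q a = cdf ?q 0 + prob_of ?q {1..a}" unfolding cdf_def prob_of_def by simp
  ultimately show ?thesis unfolding level_rule_def by simp
qed

lemma cdf_aggregate_eq_level_rule:
  assumes pp: "pp \<in> Profiles n m" and a: "a < m - 1"
  shows "cdf (\<psi> pp) a = level_rule (\<lambda>j. cdf (pp j) a)"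
proof -
  let ?x = "\<lambda>j. cdf (pp j) a"
  have x: "?x \<in> Agents n \<rightarrow> {0..1}" using Profiles_memD[OF pp] cdf_in_unit_interval by blast
  have "cdf (\<psi> pp) a = cdf (\<psi> (two_point_profile ?x)) a"
    using a by (intro cdf_aggregate_local pp two_point_profile_in_Profiles x)
      (auto simp: two_point_profile_def cdf_two_point)
  then show ?thesis using cdf_aggregate_two_point_profile[OF x a] by simp
qed

lemma level_rule_mono:
  assumes x: "x \<in> Agents n \<rightarrow> {0..1}" and y: "y \<in> Agents n \<rightarrow> {0..1}"
    and le: "\<And>j. j \<in> Agents n \<Longrightarrow> x j \<le> y j"
  shows "level_rule x \<le> level_rule y"
proof -
  define pp where "pp = restrict (\<lambda>j. three_point 0 (x j) 1 (y j - x j) (m - 1) (1 - y j)) (Agents n)"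
  have pp: "pp \<in> Profiles n m" unfolding pp_def using x y le three_le_m
    by (intro restrict_in_Profiles three_point_in_Dists) auto
  have "cdf (\<psi> pp) 0 = level_rule x" "cdf (\<psi> pp) 1 = level_rule y"
    using three_le_m
    by (simp_all add: cdf_aggregate_eq_level_rule[OF pp])
      (auto intro!: level_rule_cong simp: pp_def cdf_three_point)
  then show ?thesis using cdf_mono[OF aggregate_in_Dists[OF pp], of 0 1] by simp
qed

lemma level_rule_median:
  assumes x: "x \<in> Agents n \<rightarrow> {0..1}" and i: "i \<in> Agents n" and t: "t \<in> {0..1}"
  shows "level_rule (x(i := t)) = max (level_rule (x(i := 0))) (min t (level_rule (x(i := 1))))"
proof -
  let ?h = "\<lambda>s. level_rule (x(i := s))"
  have x_upd: "x(i := s) \<in> Agents n \<rightarrow> {0..1}" if "s \<in> {0..1}" for s using x that by auto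
  have SP: "(s < ?h s \<longrightarrow> ?h s \<le> ?h s') \<and> (?h s < s \<longrightarrow> ?h s' \<le> ?h s)"
    if s: "s \<in> {0..1}" and s': "s' \<in> {0..1}" for s s'
  proof -
    let ?pp = "two_point_profile (x(i := s))"
    have "cdf (?pp i) 0 = s" using i three_le_m by (simp add: two_point_profile_def cdf_two_point)
    then show ?thesis
      using level_SPD[OF i two_point_profile_in_Profiles[OF x_upd[OF s]] two_point_in_Dists[OF s']]
        three_le_m unfolding two_point_profile_fun_upd[OF i] level_rule_def by simp
  qed
  moreover have "0 \<le> ?h 0" "?h 1 \<le> 1" using level_rule_in_unit_interval x_upd by auto
  ultimately show ?thesis using median_form_of_level_SP[of ?h, OF SP _ _ t] by blast
qed

lemma level_rule_const_0: "level_rule (\<lambda>_. 0) = 0"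
proof -
  let ?pp = "two_point_profile (\<lambda>_. 0)"
  have pp: "?pp \<in> Profiles n m" by (intro two_point_profile_in_Profiles) auto
  have "prob_of (?pp j) {0} = 0" if "j \<in> Agents n" for j
    using that three_le_m
    by (simp add: two_point_profile_def two_point_def prob_of_def three_point_def point_mass_def)
  then have "prob_of (\<psi> ?pp) {0} = 0" using three_le_m by (intro aggregate_null_set pp) auto
  then show ?thesis unfolding level_rule_def cdf_0 prob_of_def by simp
qed

lemma level_rule_const_1: "level_rule (\<lambda>_. 1) = 1"
proof -
  let ?pp = "two_point_profile (\<lambda>_. 1)"
  have pp: "?pp \<in> Profiles n m" by (intro two_point_profile_in_Profiles) auto
  have "prob_of (?pp j) {1..<m} = 0" if "j \<in> Agents n" for j
    using that by (simp add: two_point_profile_def two_point_def prob_of_def three_point_def point_mass_def)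
  then have "prob_of (\<psi> ?pp) {1..<m} = 0" by (intro aggregate_null_set pp) auto
  moreover have "{1..<m} \<subseteq> {..<m}" by auto
  ultimately have "prob_of (\<psi> ?pp) ({..<m} - {1..<m}) = 1"
    using prob_of_complement[OF aggregate_in_Dists[OF pp]] by simp
  moreover have "{..<m} - {1..<m} = {0}" using three_le_m by auto
  ultimately show ?thesis unfolding level_rule_def cdf_0 prob_of_def by simp
qed

definition coalition_value :: "nat set \<Rightarrow> real" where
  "coalition_value S = level_rule (\<lambda>j. of_bool (j \<in> S))"

definition coalition_vector :: "nat \<Rightarrow> real \<Rightarrow> nat \<Rightarrow> real \<Rightarrow> nat set \<Rightarrow> nat \<Rightarrow> real" where
  "coalition_vector i t k b S = (\<lambda>j. if j = i then t else if j = k then b else of_bool (j \<in> S))"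

lemma coalition_value_in_unit_interval: "coalition_value S \<in> {0..1}"
  unfolding coalition_value_def by (intro level_rule_in_unit_interval) auto

lemma coalition_value_mono: "S \<subseteq> S' \<Longrightarrow> coalition_value S \<le> coalition_value S'"
  unfolding coalition_value_def by (intro level_rule_mono) auto

lemma coalition_value_empty: "coalition_value {} = 0"
  unfolding coalition_value_def using level_rule_const_0 by simp

lemma coalition_value_Agents: "coalition_value (Agents n) = 1"
  unfolding coalition_value_def using level_rule_const_1 level_rule_cong[of "\<lambda>j. of_bool (j \<in> Agents n)"]
  by simp

lemma level_rule_coalition_vector:
  assumes i: "i \<in> Agents n" and k: "k \<in> Agents n" and "i \<noteq> k"
    and S: "S \<subseteq> Agents n" "i \<notin> S" "k \<notin> S" and t: "t \<in> {0..1}" and b: "b \<in> {0..1}"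
  shows "level_rule (coalition_vector i t k b S) =
    max (max (coalition_value S) (min b (coalition_value (insert k S))))
        (min t (max (coalition_value (insert i S)) (min b (coalition_value (insert i (insert k S))))))"
proof -
  have in_cube: "coalition_vector i t' k b' S \<in> Agents n \<rightarrow> {0..1}"
    if "t' \<in> {0..1}" "b' \<in> {0..1}" for t' b'
    using that unfolding coalition_vector_def by auto
  have upd_i: "(coalition_vector i 0 k b' S)(i := t') = coalition_vector i t' k b' S" for t' b'
    unfolding coalition_vector_def by (auto simp: fun_eq_iff)
  have upd_k: "(coalition_vector i t' k 0 S)(k := b') = coalition_vector i t' k b' S" for t' b'
    unfolding coalition_vector_def using \<open>i \<noteq> k\<close> by (auto simp: fun_eq_iff)
  have corners:
    "level_rule (coalition_vector i 0 k 0 S) = coalition_value S"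
    "level_rule (coalition_vector i 0 k 1 S) = coalition_value (insert k S)"
    "level_rule (coalition_vector i 1 k 0 S) = coalition_value (insert i S)"
    "level_rule (coalition_vector i 1 k 1 S) = coalition_value (insert i (insert k S))"
    unfolding coalition_value_def coalition_vector_def using S \<open>i \<noteq> k\<close>
    by (auto intro!: level_rule_cong)
  have median_k: "level_rule (coalition_vector i t' k b S) =
      max (level_rule (coalition_vector i t' k 0 S)) (min b (level_rule (coalition_vector i t' k 1 S)))"
    if "t' \<in> {0..1}" for t'
    using level_rule_median[OF in_cube[OF that, of 0] k b] unfolding upd_k by simp
  have median_i: "level_rule (coalition_vector i t k b S) =
      max (level_rule (coalition_vector i 0 k b S)) (min t (level_rule (coalition_vector i 1 k b S)))"
    using level_rule_median[OF in_cube[of 0 b] i t] b unfolding upd_i by simp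
  show ?thesis
    using median_i unfolding median_k[of 0, simplified] median_k[of 1, simplified] corners .
qed

definition coalition_profile ::
    "nat \<Rightarrow> nat \<Rightarrow> nat set \<Rightarrow> nat \<Rightarrow> nat \<Rightarrow> (nat \<Rightarrow> real) \<Rightarrow> (nat \<Rightarrow> real) \<Rightarrow> nat \<Rightarrow> nat \<Rightarrow> real" where
  "coalition_profile i k S xS xR p pk = restrict (\<lambda>j. if j = i then p else if j = k then pk
     else if j \<in> S then point_mass xS 1 else point_mass xR 1) (Agents n)"

lemma coalition_profile_in_Profiles:
  "p \<in> Dists m \<Longrightarrow> pk \<in> Dists m \<Longrightarrow> xS < m \<Longrightarrow> xR < m \<Longrightarrow>
    coalition_profile i k S xS xR p pk \<in> Profiles n m"
  unfolding coalition_profile_def by (intro restrict_in_Profiles) (auto intro: point_mass_in_Dists)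

lemma coalition_profile_fun_upd:
  "i \<in> Agents n \<Longrightarrow> (coalition_profile i k S xS xR p pk)(i := p') = coalition_profile i k S xS xR p' pk"
  unfolding coalition_profile_def by (auto simp: fun_eq_iff)

lemma coalition_profile_apply: "i \<in> Agents n \<Longrightarrow> coalition_profile i k S xS xR p pk i = p"
  unfolding coalition_profile_def by simp

lemma cdf_aggregate_coalition_profile:
  assumes i: "i \<in> Agents n" and k: "k \<in> Agents n" and "i \<noteq> k"
    and S: "S \<subseteq> Agents n" "i \<notin> S" "k \<notin> S" and p: "p \<in> Dists m" and pk: "pk \<in> Dists m"
    and x: "xS \<le> xR" "xR < m" and a: "a < m - 1" and t: "cdf p a = t" and b: "cdf pk a = b"
    and C: "C = (if xR \<le> a then Agents n - {i, k} else if xS \<le> a then S else {})"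
  shows "cdf (\<psi> (coalition_profile i k S xS xR p pk)) a =
    max (max (coalition_value C) (min b (coalition_value (insert k C))))
        (min t (max (coalition_value (insert i C)) (min b (coalition_value (insert i (insert k C))))))"
    (is "_ = ?rhs")
proof -
  have pp: "coalition_profile i k S xS xR p pk \<in> Profiles n m"
    using x by (intro coalition_profile_in_Profiles p pk) auto
  have "cdf (coalition_profile i k S xS xR p pk j) a = coalition_vector i (cdf p a) k (cdf pk a) C j"
    if j: "j \<in> Agents n" for j
  proof (cases "j = i \<or> j = k")
    case True
    then show ?thesis using j \<open>i \<noteq> k\<close> unfolding coalition_profile_def coalition_vector_def by auto
  next
    case False
    then show ?thesis using j x unfolding C coalition_profile_def coalition_vector_def
      by (simp add: cdf_point_mass)
  qed
  then have "cdf (\<psi> (coalition_profile i k S xS xR p pk)) a =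
        level_rule (coalition_vector i (cdf p a) k (cdf pk a) C)"
    unfolding cdf_aggregate_eq_level_rule[OF pp a] by (rule level_rule_cong)
  also have "\<dots> = ?rhs"
    using S C \<open>i \<noteq> k\<close> cdf_in_unit_interval[OF p, of a] cdf_in_unit_interval[OF pk, of a]
    unfolding t b by (intro level_rule_coalition_vector i k) auto
  finally show ?thesis .
qed

lemma cdf_aggregate_upper_test_profile:
  assumes i: "i \<in> Agents n" and k: "k \<in> Agents n" and "i \<noteq> k"
    and T: "T \<subseteq> Agents n" "i \<notin> T" "k \<notin> T" and p: "p \<in> Dists m"
    and s: "max (coalition_value (insert i T)) (coalition_value (insert k T)) < s"
      "s < coalition_value (insert i (insert k T))"
    and p0: "coalition_value {i} \<le> cdf p 0"
    and p1: "coalition_value (insert k T) \<le> cdf p 1" "cdf p 1 \<le> s"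
    and p_upper: "\<And>a. 2 \<le> a \<Longrightarrow> a < m - 1 \<Longrightarrow> s \<le> cdf p a"
  defines "pp \<equiv> coalition_profile i k T 1 (m - 1) p (three_point 1 s (m - 1) (1 - s) 0 0)"
  shows "pp \<in> Profiles n m" and "cdf (\<psi> pp) 0 = coalition_value {i}" and "cdf (\<psi> pp) 1 = cdf p 1"
    and "\<And>a. 2 \<le> a \<Longrightarrow> a < m - 1 \<Longrightarrow> cdf (\<psi> pp) a = s"
proof -
  let ?pk = "three_point 1 s (m - 1) (1 - s) 0 0"
  have unit: "0 \<le> coalition_value S" "coalition_value S \<le> 1" for S
    using coalition_value_in_unit_interval by auto
  have mono: "coalition_value {i} \<le> coalition_value (insert i T)"
    "coalition_value T \<le> coalition_value (insert k T)" by (auto intro: coalition_value_mono)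
  have pk: "?pk \<in> Dists m"
    using three_le_m s unit[of "insert i T"] unit[of "insert i (insert k T)"]
    by (intro three_point_in_Dists) auto
  have m: "1 \<le> m - 1" "m - 1 < m" "0 < m - 1" "1 < m - 1" using three_le_m by auto
  show "pp \<in> Profiles n m" unfolding pp_def using p pk m by (intro coalition_profile_in_Profiles) auto
  note out = cdf_aggregate_coalition_profile[OF i k \<open>i \<noteq> k\<close> T p pk m(1,2), folded pp_def]
  note simps = coalition_value_empty min_absorb1 min_absorb2 max_absorb1 max_absorb2
  show "cdf (\<psi> pp) 0 = coalition_value {i}"
    using out[OF m(3) refl, of 0 "{}"] three_le_m p0 unit mono
    by (simp add: cdf_three_point simps)
  show "cdf (\<psi> pp) 1 = cdf p 1"
    using out[OF m(4) refl, of s T] m p1 s unit mono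
    by (simp add: cdf_three_point simps)
  show "cdf (\<psi> pp) a = s" if "2 \<le> a" "a < m - 1" for a
    using out[OF that(2) refl, of s T] p_upper[OF that] that s unit mono
    by (simp add: cdf_three_point simps)
qed

lemma cdf_aggregate_lower_test_profile:
  assumes i: "i \<in> Agents n" and k: "k \<in> Agents n" and "i \<noteq> k"
    and T: "T \<subseteq> Agents n" "i \<notin> T" "k \<notin> T" and p: "p \<in> Dists m"
    and s: "coalition_value T < s" "s < coalition_value (insert k T)"
    and p0: "cdf p 0 = 0"
    and p1: "s \<le> cdf p 1" "cdf p 1 \<le> coalition_value (insert i T)"
    and p_upper: "\<And>a. 2 \<le> a \<Longrightarrow> a < m - 1 \<Longrightarrow> cdf p a \<le> coalition_value (Agents n - {i})"
  defines "pp \<equiv> coalition_profile i k T 0 2 p (three_point 0 s 2 (1 - s) 0 0)"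
  shows "pp \<in> Profiles n m" and "cdf (\<psi> pp) 0 = s" and "cdf (\<psi> pp) 1 = cdf p 1"
    and "\<And>a. 2 \<le> a \<Longrightarrow> a < m - 1 \<Longrightarrow> cdf (\<psi> pp) a = coalition_value (Agents n - {i})"
proof -
  let ?pk = "three_point 0 s 2 (1 - s) 0 0"
  have unit: "0 \<le> coalition_value S" "coalition_value S \<le> 1" for S
    using coalition_value_in_unit_interval by auto
  have mono: "coalition_value (insert k T) \<le> coalition_value (insert i (insert k T))"
    "coalition_value (Agents n - {i, k}) \<le> coalition_value (Agents n - {i})"
    by (auto intro: coalition_value_mono)
  have pk: "?pk \<in> Dists m"
    using three_le_m s unit[of T] unit[of "insert k T"] by (intro three_point_in_Dists) auto
  have m: "2 < m" "0 < m - 1" "1 < m - 1" using three_le_m by auto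
  show "pp \<in> Profiles n m" unfolding pp_def using p pk m by (intro coalition_profile_in_Profiles) auto
  have others: "insert k (Agents n - {i, k}) = Agents n - {i}" "insert i (Agents n - {i}) = Agents n"
    using i k \<open>i \<noteq> k\<close> by auto
  note out = cdf_aggregate_coalition_profile[OF i k \<open>i \<noteq> k\<close> T p pk _ m(1), of 0, folded pp_def]
  note simps = others coalition_value_Agents min_absorb1 min_absorb2 max_absorb1 max_absorb2
  show "cdf (\<psi> pp) 0 = s"
    using out[OF _ m(2) refl, of s T] three_le_m p0 s unit unit[of T]
    by (simp add: cdf_three_point simps le_max_iff_disj)
  show "cdf (\<psi> pp) 1 = cdf p 1"
    using out[OF _ m(3) refl, of s T] p1 s unit mono
    by (simp add: cdf_three_point simps)
  show "cdf (\<psi> pp) a = coalition_value (Agents n - {i})" if "2 \<le> a" "a < m - 1" for a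
    using out[OF _ that(2) refl, of 1 "Agents n - {i, k}"] p_upper[OF that] that unit mono
    by (simp add: cdf_three_point simps)
qed

end

locale L1_level_SP_aggregator = level_SP_aggregator +
  assumes four_le_m: "4 \<le> m"
    and L1_SP: "L1_SP n m \<psi>"
begin

lemma L1_SP_four_point:
  assumes i: "i \<in> Agents n" and pp: "pp \<in> Profiles n m" and p': "p' \<in> Dists m"
    and support: "\<And>k. 3 \<le> k \<Longrightarrow> k < m - 1 \<Longrightarrow> pp i k = 0"
    and upper: "\<And>a. 2 \<le> a \<Longrightarrow> a < m - 1 \<Longrightarrow> cdf (\<psi> pp) a = c \<and> cdf (\<psi> (pp(i := p'))) a = c"
  shows "\<bar>cdf (\<psi> pp) 0 - pp i 0\<bar> + \<bar>cdf (\<psi> pp) 1 - cdf (\<psi> pp) 0 - pp i 1\<bar>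
           + \<bar>c - cdf (\<psi> pp) 1 - pp i 2\<bar>
         \<le> \<bar>cdf (\<psi> (pp(i := p'))) 0 - pp i 0\<bar>
           + \<bar>cdf (\<psi> (pp(i := p'))) 1 - cdf (\<psi> (pp(i := p'))) 0 - pp i 1\<bar>
           + \<bar>c - cdf (\<psi> (pp(i := p'))) 1 - pp i 2\<bar>"
proof -
  let ?pp' = "pp(i := p')"
  have "L1 m (\<psi> pp) (pp i) \<le> L1 m (\<psi> ?pp') (pp i)"
    using L1_SP i pp p' unfolding L1_SP_def by blast
  moreover have "L1 m (\<psi> pp) (pp i) = \<bar>cdf (\<psi> pp) 0 - pp i 0\<bar>
      + \<bar>cdf (\<psi> pp) 1 - cdf (\<psi> pp) 0 - pp i 1\<bar> + \<bar>c - cdf (\<psi> pp) 1 - pp i 2\<bar>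
      + \<bar>1 - c - pp i (m - 1)\<bar>"
    using upper by (intro L1_four_point four_le_m aggregate_in_Dists pp support) auto
  moreover have "L1 m (\<psi> ?pp') (pp i) = \<bar>cdf (\<psi> ?pp') 0 - pp i 0\<bar>
      + \<bar>cdf (\<psi> ?pp') 1 - cdf (\<psi> ?pp') 0 - pp i 1\<bar> + \<bar>c - cdf (\<psi> ?pp') 1 - pp i 2\<bar>
      + \<bar>1 - c - pp i (m - 1)\<bar>"
    using upper fun_upd_in_Profiles[OF pp i p']
    by (intro L1_four_point four_le_m aggregate_in_Dists support) auto
  ultimately show ?thesis by linarith
qed

lemma coalition_value_insert2_le_max:
  assumes i: "i \<in> Agents n" and k: "k \<in> Agents n" and "i \<noteq> k"
    and T: "T \<subseteq> Agents n" "i \<notin> T" "k \<notin> T"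
  shows "coalition_value (insert i (insert k T))
           \<le> max (coalition_value (insert i T)) (coalition_value (insert k T))"
proof (rule ccontr)
  let ?W = coalition_value
  assume contra: "\<not> ?thesis"
  define s where "s = (max (?W (insert i T)) (?W (insert k T)) + ?W (insert i (insert k T))) / 2"
  have s: "max (?W (insert i T)) (?W (insert k T)) < s" "s < ?W (insert i (insert k T))"
    using contra unfolding s_def by auto
  define \<beta> where "\<beta> = max (max (?W {i}) (?W (insert k T))) (2 * s - 1)"
  define \<alpha> where "\<alpha> = (s + \<beta>) / 2"
  have "0 \<le> ?W {i}" "?W (insert i (insert k T)) \<le> 1" using coalition_value_in_unit_interval by auto
  moreover have "?W {i} \<le> ?W (insert i T)" by (auto intro: coalition_value_mono)
  ultimately have \<alpha>: "?W {i} < \<alpha>" "?W (insert k T) < \<alpha>" "2 * s - 1 < \<alpha>" "\<alpha> < s" "2 * \<alpha> = s + \<beta>"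
    using s unfolding \<alpha>_def \<beta>_def by auto
  text \<open>Agent i's true cdf is (\<alpha>, s, 1) at levels 0, 1 and above; reporting (\<alpha>, \<alpha>, 1) instead
    lowers the output cdf at level 1 from s to \<alpha>, which brings the output closer to the truth.\<close>
  define p where "p = three_point 0 \<alpha> 1 (s - \<alpha>) 2 (1 - s)"
  define p' where "p' = three_point 0 \<alpha> 2 (1 - \<alpha>) 0 0"
  have p: "p \<in> Dists m" "cdf p 0 = \<alpha>" "cdf p 1 = s" "\<And>a. 2 \<le> a \<Longrightarrow> cdf p a = 1"
    unfolding p_def cdf_three_point using three_le_m \<alpha> \<open>0 \<le> ?W {i}\<close>
    by (auto intro!: three_point_in_Dists)
  have p': "p' \<in> Dists m" "cdf p' 0 = \<alpha>" "cdf p' 1 = \<alpha>" "\<And>a. 2 \<le> a \<Longrightarrow> cdf p' a = 1"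
    unfolding p'_def cdf_three_point using three_le_m \<alpha> \<open>0 \<le> ?W {i}\<close>
    by (auto intro!: three_point_in_Dists)
  define pk where "pk = three_point 1 s (m - 1) (1 - s) 0 0"
  define pp where "pp = coalition_profile i k T 1 (m - 1) p pk"
  have upd: "pp(i := p') = coalition_profile i k T 1 (m - 1) p' pk"
    unfolding pp_def using coalition_profile_fun_upd[OF i] .
  note test = cdf_aggregate_upper_test_profile[OF i k \<open>i \<noteq> k\<close> T _ s, folded pk_def]
  have sincere: "pp \<in> Profiles n m" "cdf (\<psi> pp) 0 = ?W {i}" "cdf (\<psi> pp) 1 = s"
    "\<And>a. 2 \<le> a \<Longrightarrow> a < m - 1 \<Longrightarrow> cdf (\<psi> pp) a = s"
    unfolding pp_def using test[OF p(1)] p \<alpha> by auto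
  have deviation: "cdf (\<psi> (pp(i := p'))) 0 = ?W {i}" "cdf (\<psi> (pp(i := p'))) 1 = \<alpha>"
    "\<And>a. 2 \<le> a \<Longrightarrow> a < m - 1 \<Longrightarrow> cdf (\<psi> (pp(i := p'))) a = s"
    unfolding upd using test[OF p'(1)] p' \<alpha> by auto
  have "p 0 = \<alpha>" "p 1 = s - \<alpha>" "p 2 = 1 - s" "\<And>a. 3 \<le> a \<Longrightarrow> p a = 0"
    unfolding p_def three_point_def point_mass_def by simp_all
  moreover have "pp i = p" unfolding pp_def using coalition_profile_apply[OF i] .
  ultimately have "\<bar>?W {i} - \<alpha>\<bar> + \<bar>s - ?W {i} - (s - \<alpha>)\<bar> + \<bar>s - s - (1 - s)\<bar>
      \<le> \<bar>?W {i} - \<alpha>\<bar> + \<bar>\<alpha> - ?W {i} - (s - \<alpha>)\<bar> + \<bar>s - \<alpha> - (1 - s)\<bar>"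
    using L1_SP_four_point[OF i sincere(1) p'(1), of s] sincere deviation by simp
  then show False using \<alpha> \<open>0 \<le> ?W {i}\<close> by (simp add: abs_if split: if_splits)
qed

lemma min_coalition_value_insert_le:
  assumes i: "i \<in> Agents n" and k: "k \<in> Agents n" and "i \<noteq> k"
    and T: "T \<subseteq> Agents n" "i \<notin> T" "k \<notin> T"
  shows "min (coalition_value (insert i T)) (coalition_value (insert k T)) \<le> coalition_value T"
proof (rule ccontr)
  let ?W = coalition_value
  let ?\<mu> = "min (?W (insert i T)) (?W (insert k T))"
  assume contra: "\<not> ?thesis"
  define s where "s = (?W T + ?\<mu>) / 2"
  define \<gamma> where "\<gamma> = (s + ?\<mu>) / 2"
  have "?W (insert k T) \<le> ?W (Agents n - {i})" using T k \<open>i \<noteq> k\<close> by (auto intro: coalition_value_mono)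
  moreover have "?\<mu> \<le> ?W (insert i T)" "?\<mu> \<le> ?W (insert k T)" by auto
  ultimately have s: "?W T < s" "s < \<gamma>" "\<gamma> < ?W (insert i T)" "\<gamma> < ?W (insert k T)"
    "2 * \<gamma> \<le> s + ?W (Agents n - {i})"
    using contra unfolding s_def \<gamma>_def by (auto simp: field_simps)
  have "0 \<le> ?W T" "?W (insert i T) \<le> 1" using coalition_value_in_unit_interval by auto
  text \<open>Agent i's true cdf is (0, s, \<gamma>) at levels 0, 1 and above; reporting (0, \<gamma>, \<gamma>) instead
    raises the output cdf at level 1 from s to \<gamma>, which brings the output closer to the truth.\<close>
  define p where "p = three_point 1 s 2 (\<gamma> - s) (m - 1) (1 - \<gamma>)"
  define p' where "p' = three_point 1 \<gamma> (m - 1) (1 - \<gamma>) 0 0"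
  have p: "p \<in> Dists m" "cdf p 0 = 0" "cdf p 1 = s" "\<And>a. 2 \<le> a \<Longrightarrow> a < m - 1 \<Longrightarrow> cdf p a = \<gamma>"
    unfolding p_def cdf_three_point using three_le_m s \<open>0 \<le> ?W T\<close> \<open>?W (insert i T) \<le> 1\<close>
    by (auto intro!: three_point_in_Dists)
  have p': "p' \<in> Dists m" "cdf p' 0 = 0" "cdf p' 1 = \<gamma>" "\<And>a. 1 \<le> a \<Longrightarrow> a < m - 1 \<Longrightarrow> cdf p' a = \<gamma>"
    unfolding p'_def cdf_three_point using three_le_m s \<open>0 \<le> ?W T\<close> \<open>?W (insert i T) \<le> 1\<close>
    by (auto intro!: three_point_in_Dists)
  define pk where "pk = three_point 0 s 2 (1 - s) 0 0"
  define pp where "pp = coalition_profile i k T 0 2 p pk"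
  have upd: "pp(i := p') = coalition_profile i k T 0 2 p' pk"
    unfolding pp_def using coalition_profile_fun_upd[OF i] .
  have "s < ?W (insert k T)" using s by linarith
  note test = cdf_aggregate_lower_test_profile[OF i k \<open>i \<noteq> k\<close> T _ s(1) this, folded pk_def]
  have sincere: "pp \<in> Profiles n m" "cdf (\<psi> pp) 0 = s" "cdf (\<psi> pp) 1 = s"
    "\<And>a. 2 \<le> a \<Longrightarrow> a < m - 1 \<Longrightarrow> cdf (\<psi> pp) a = ?W (Agents n - {i})"
    unfolding pp_def using test[OF p(1) p(2)] p s by auto
  have deviation: "cdf (\<psi> (pp(i := p'))) 0 = s" "cdf (\<psi> (pp(i := p'))) 1 = \<gamma>"
    "\<And>a. 2 \<le> a \<Longrightarrow> a < m - 1 \<Longrightarrow> cdf (\<psi> (pp(i := p'))) a = ?W (Agents n - {i})"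
    unfolding upd using test[OF p'(1) p'(2)] p' s by auto
  have "p 0 = 0" "p 1 = s" "p 2 = \<gamma> - s" "\<And>a. 3 \<le> a \<Longrightarrow> a < m - 1 \<Longrightarrow> p a = 0"
    unfolding p_def three_point_def point_mass_def using four_le_m by auto
  moreover have "pp i = p" unfolding pp_def using coalition_profile_apply[OF i] .
  ultimately have "\<bar>s - 0\<bar> + \<bar>s - s - s\<bar> + \<bar>?W (Agents n - {i}) - s - (\<gamma> - s)\<bar>
      \<le> \<bar>s - 0\<bar> + \<bar>\<gamma> - s - s\<bar> + \<bar>?W (Agents n - {i}) - \<gamma> - (\<gamma> - s)\<bar>"
    using L1_SP_four_point[OF i sincere(1) p'(1), of "?W (Agents n - {i})"] sincere deviation
    by simp
  then show False using s \<open>0 \<le> ?W T\<close> by (simp add: abs_if split: if_splits)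
qed

lemma coalition_value_le_singleton:
  assumes "T \<subseteq> Agents n" "T \<noteq> {}"
  shows "\<exists>j\<in>T. coalition_value T \<le> coalition_value {j}"
  using assms
proof (induction "card T" arbitrary: T rule: less_induct)
  case less
  show ?case
  proof (cases "\<exists>j. T = {j}")
    case True
    then show ?thesis by auto
  next
    case False
    obtain i k where ik: "i \<in> T" "k \<in> T" "i \<noteq> k" using less.prems(2) False by blast
    define T0 where "T0 = T - {i, k}"
    have T: "T = insert i (insert k T0)" unfolding T0_def using ik by auto
    have fin: "finite T" using less.prems(1) finite_Agents finite_subset by blast
    have smaller: "card (insert i T0) < card T" "card (insert k T0) < card T"
      unfolding T using fin ik unfolding T0_def by (auto simp: card_insert_if)
    obtain j1 where j1: "j1 \<in> insert i T0" "coalition_value (insert i T0) \<le> coalition_value {j1}"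
      using less.hyps[OF smaller(1)] less.prems(1) T by auto
    obtain j2 where j2: "j2 \<in> insert k T0" "coalition_value (insert k T0) \<le> coalition_value {j2}"
      using less.hyps[OF smaller(2)] less.prems(1) T by auto
    have "coalition_value T \<le> max (coalition_value (insert i T0)) (coalition_value (insert k T0))"
      unfolding T using less.prems(1) ik
      by (intro coalition_value_insert2_le_max) (auto simp: T0_def)
    then show ?thesis
    proof (cases "coalition_value (insert i T0) \<le> coalition_value (insert k T0)")
      case True
      then show ?thesis using \<open>coalition_value T \<le> _\<close> j2 T by (intro bexI[of _ j2]) auto
    next
      case False
      then show ?thesis using \<open>coalition_value T \<le> _\<close> j1 T by (intro bexI[of _ j1]) auto
    qed
  qed
qed

lemma ex_decisive_agent: "\<exists>i\<in>Agents n. coalition_value {i} = 1"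
proof -
  have "Agents n \<noteq> {}" using coalition_value_empty coalition_value_Agents by auto
  then obtain i where "i \<in> Agents n" "coalition_value (Agents n) \<le> coalition_value {i}"
    using coalition_value_le_singleton by blast
  then show ?thesis using coalition_value_Agents coalition_value_in_unit_interval[of "{i}"] by auto
qed

lemma coalition_value_without_decisive:
  assumes i: "i \<in> Agents n" and decisive: "coalition_value {i} = 1" and F: "F \<subseteq> Agents n - {i}"
  shows "coalition_value F = 0"
proof -
  have "finite F" using finite_subset[OF F] finite_Agents by blast
  then show ?thesis using F
  proof (induction F rule: finite_induct)
    case empty
    show ?case using coalition_value_empty .
  next
    case (insert k F)
    have "min (coalition_value (insert i F)) (coalition_value (insert k F)) \<le> coalition_value F"
      using insert i by (intro min_coalition_value_insert_le) auto
    moreover have "coalition_value (insert i F) = 1"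
      using coalition_value_mono[of "{i}" "insert i F"] coalition_value_in_unit_interval[of "insert i F"]
        decisive by auto
    ultimately show ?case using insert coalition_value_in_unit_interval[of "insert k F"] by auto
  qed
qed

lemma level_rule_eq_decisive:
  assumes i: "i \<in> Agents n" and decisive: "coalition_value {i} = 1" and x: "x \<in> Agents n \<rightarrow> {0..1}"
  shows "level_rule x = x i"
proof -
  have xi: "x i \<in> {0..1}" using x i by auto
  have cube: "(\<lambda>_. c)(i := x i) \<in> Agents n \<rightarrow> {0..1}" if "c \<in> {0..1}" for c
    using xi that by auto
  have corner: "level_rule ((\<lambda>_. c)(i := d)) = coalition_value ((if c = 1 then Agents n - {i} else {})
      \<union> (if d = 1 then {i} else {}))" if "c \<in> {0, 1}" "d \<in> {0, 1}" for c d :: real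
    unfolding coalition_value_def using that i by (intro level_rule_cong) auto
  have lower: "level_rule ((\<lambda>_. 0)(i := x i)) = x i"
    using level_rule_median[OF cube[of 0] i xi] corner[of 0 0] corner[of 0 1] decisive xi
    by (simp add: coalition_value_empty)
  have upper: "level_rule ((\<lambda>_. 1)(i := x i)) = x i"
    using level_rule_median[OF cube[of 1] i xi] corner[of 1 0] corner[of 1 1] xi
      coalition_value_without_decisive[OF i decisive order_refl] insert_absorb[OF i]
    by (simp add: coalition_value_Agents)
  have "level_rule ((\<lambda>_. 0)(i := x i)) \<le> level_rule x" "level_rule x \<le> level_rule ((\<lambda>_. 1)(i := x i))"
    using x cube by (auto intro!: level_rule_mono)
  then show ?thesis using lower upper by simp
qed

lemma dictatorial: "dictatorial n m \<psi>"
proof -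
  obtain i where i: "i \<in> Agents n" and decisive: "coalition_value {i} = 1"
    using ex_decisive_agent by blast
  have "\<psi> pp = pp i" if pp: "pp \<in> Profiles n m" for pp
  proof (rule cdf_inject)
    fix a
    show "cdf (\<psi> pp) a = cdf (pp i) a"
    proof (cases "a < m - 1")
      case True
      have "(\<lambda>j. cdf (pp j) a) \<in> Agents n \<rightarrow> {0..1}"
        using Profiles_memD[OF pp] cdf_in_unit_interval by blast
      then show ?thesis
        using cdf_aggregate_eq_level_rule[OF pp True] level_rule_eq_decisive[OF i decisive] by simp
    next
      case False
      then show ?thesis
        using cdf_eq_1[OF aggregate_in_Dists[OF pp]] cdf_eq_1[OF Profiles_memD[OF pp i]] by simp
    qed
  qed
  then show ?thesis unfolding dictatorial_def using i by blast
qed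

end

lemma dictatorial_fun_upd_cases:
  assumes "dictatorial n m \<psi>" "j \<in> Agents n" "pp \<in> Profiles n m" "p' \<in> Dists m"
  shows "\<psi> pp = pp j \<or> \<psi> (pp(j := p')) = \<psi> pp"
proof -
  obtain i where i: "i \<in> Agents n" and dict: "\<And>pp. pp \<in> Profiles n m \<Longrightarrow> \<psi> pp = pp i"
    using assms(1) unfolding dictatorial_def by blast
  show ?thesis
    using dict[OF assms(3)] dict[OF fun_upd_in_Profiles[OF assms(3,2,4)]] by (cases "j = i") auto
qed

lemma dictatorial_imp_level_SP: "dictatorial n m \<psi> \<Longrightarrow> level_SP n m \<psi>"
  unfolding level_SP_def by (metis dictatorial_fun_upd_cases order_less_irrefl order_refl)

lemma dictatorial_imp_L1_SP:
  assumes "dictatorial n m \<psi>"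
  shows "L1_SP n m \<psi>"
  unfolding L1_SP_def
proof (intro ballI)
  fix j pp p' assume "j \<in> Agents n" "pp \<in> Profiles n m" "p' \<in> Dists m"
  then consider "\<psi> pp = pp j" | "\<psi> (pp(j := p')) = \<psi> pp" using dictatorial_fun_upd_cases[OF assms] by blast
  then show "L1 m (\<psi> pp) (pp j) \<le> L1 m (\<psi> (pp(j := p'))) (pp j)"
    by cases (auto simp: L1_def intro: sum_nonneg)
qed

theorem mainTheorem16:
  fixes n m :: nat
    and \<psi> :: "(nat \<Rightarrow> nat \<Rightarrow> real) \<Rightarrow> (nat \<Rightarrow> real)"
  assumes "m \<ge> 4"
    and "is_PAF n m \<psi>"
    and "certainty_preserving n m \<psi>"
  shows "(level_SP n m \<psi> \<and> L1_SP n m \<psi>) \<longleftrightarrow> dictatorial n m \<psi>"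
proof
  assume "level_SP n m \<psi> \<and> L1_SP n m \<psi>"
  then interpret L1_level_SP_aggregator n m \<psi>
    using assms by unfold_locales auto
  show "dictatorial n m \<psi>" by (rule dictatorial)
next
  assume "dictatorial n m \<psi>"
  then show "level_SP n m \<psi> \<and> L1_SP n m \<psi>"
    using dictatorial_imp_level_SP dictatorial_imp_L1_SP by blast
qed

end
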